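(* Let $p$ be a prime and $\theta=\sum_{i=j}^\infty a_iX^{-i}\in\mathbb{F}_p((X^{-1}))$, with the convention $a_1=\dots=a_{j-1}=0$ if $j>1$. Let $I$ be the $\mathbb{N}\times\mathbb{N}_0$ unit matrix over $\mathbb{F}_p$ (rows indexed by $1,2,\dots$, columns by $0,1,\dots$, with entry $1$ in row $k$ and column $k-1$ and $0$ elsewhere) and let $H(\theta)$ be the $\mathbb{N}\times\mathbb{N}_0$ Hankel matrix whose entry in row $k\geq1$ and column $l\geq0$ is $a_{k+l}$. Then the van der Corput--Kronecker-type sequence $\big((\varphi_p(n),\langle \theta n(X)\rangle|_p)\big)_{n\geq 0}$ coincides with the two-dimensional digital sequence over $\mathbb{F}_p$ generated by the matrices $C_1=I$ and $C_2=H(\theta)$.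
   Context: $\mathbb{F}_p((X^{-1}))$ is the field of formal Laurent series $\sum_{i=j}^\infty a_iX^{-i}$ over $\mathbb{F}_p$, and $\langle\sum_{i=j}^\infty a_iX^{-i}\rangle=\sum_{i\ge\max\{1,j\}}a_iX^{-i}$ is its fractional part. $\mathbb{F}_p$ is identified with $\{0,1,\dots,p-1\}$. For $n\in\mathbb{N}_0$ with base-$p$ expansion $n=n_0+n_1p+\cdots$, $n(X)=n_0+n_1X+\cdots$ and $\varphi_p(n)=\sum_{i\ge0}n_ip^{-i-1}$. For $\sum_{i\ge1}b_iX^{-i}$ over $\mathbb{F}_p$, $|_p$ means substituting $X=p$, giving $\sum_{i\ge1}b_ip^{-i}\in[0,1)$. Digital sequence: given $\mathbb{N}\times\mathbb{N}_0$ matrices $C_1,C_2$ over $\mathbb{F}_p$, for $n\ge0$ set $\vec n=(n_0,n_1,\dots,n_r,0,0,\dots)^T$ from the base-$p$ digits of $n$, compute $C_i\vec n=(y^{(i)}_1,y^{(i)}_2,\dots)^T$ modulo $p$, and set $x^{(i)}_n=\sum_{k\ge1}y^{(i)}_kp^{-k}$; the sequence is $((x_n^{(1)},x_n^{(2)}))_{n\ge0}$. *)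

theory Defs
  imports Complex_Main "HOL-Computational_Algebra.Formal_Laurent_Series"
    "Berlekamp_Zassenhaus.Finite_Field"
begin

text \<open>Convention: F_p((X^{-1})) is modelled as the formal Laurent series in the
variable Y = X^{-1} (library type fls, finitely many negative powers of Y),
over the field 'p mod_ring with p = CARD('p) prime.  Thus the coefficient a_i of
X^{-i} of theta is  fls_nth theta i.  Elements of F_p are identified with
0..p-1 via to_int_mod_ring.\<close>

definition digit :: "nat \<Rightarrow> nat \<Rightarrow> nat \<Rightarrow> nat" where
  "digit p n i = n div p ^ i mod p"

text \<open>n(X) = n_0 + n_1 X + ..., and X^l = Y^(-l).\<close>
definition natpoly :: "nat \<Rightarrow> ('p::prime_card) mod_ring fls" where
  "natpoly n = (\<Sum>l\<in>{l. digit CARD('p) n l \<noteq> 0}.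
      fls_const (of_nat (digit CARD('p) n l)) * fls_X_intpow (- int l))"

definition phi :: "nat \<Rightarrow> nat \<Rightarrow> real" where
  "phi p n = (\<Sum>i. real (digit p n i) / real p ^ (i + 1))"

text \<open>Fractional part followed by substitution X = p:
  <f>|_p = sum_{k>=1} b_k p^{-k} where b_k is the coefficient of X^{-k}.\<close>
definition frac_eval :: "('p::prime_card) mod_ring fls \<Rightarrow> real" where
  "frac_eval f = (\<Sum>k. real_of_int (to_int_mod_ring (fls_nth f (int (k + 1))))
                        / real CARD('p) ^ (k + 1))"

text \<open>N x N_0 matrices over F_p: C k l for row k >= 1, column l >= 0
  (the value at row 0 is irrelevant).\<close>
definition unit_mat :: "nat \<Rightarrow> nat \<Rightarrow> ('p::prime_card) mod_ring" where
  "unit_mat k l = (if k = l + 1 then 1 else 0)"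

definition hankel :: "('p::prime_card) mod_ring fls \<Rightarrow> nat \<Rightarrow> nat \<Rightarrow> 'p mod_ring" where
  "hankel \<theta> k l = fls_nth \<theta> (int (k + l))"

definition mat_digits :: "(nat \<Rightarrow> nat \<Rightarrow> ('p::prime_card) mod_ring) \<Rightarrow> nat \<Rightarrow> nat \<Rightarrow> 'p mod_ring" where
  "mat_digits C n k = (\<Sum>l\<in>{l. digit CARD('p) n l \<noteq> 0}. C k l * of_nat (digit CARD('p) n l))"

definition digital_point :: "(nat \<Rightarrow> nat \<Rightarrow> ('p::prime_card) mod_ring) \<Rightarrow> nat \<Rightarrow> real" where
  "digital_point C n = (\<Sum>k. real_of_int (to_int_mod_ring (mat_digits C n (k + 1)))
                           / real CARD('p) ^ (k + 1))"

definition digital_seq :: "(nat \<Rightarrow> nat \<Rightarrow> ('p::prime_card) mod_ring) \<Rightarrow>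
    (nat \<Rightarrow> nat \<Rightarrow> 'p mod_ring) \<Rightarrow> nat \<Rightarrow> real \<times> real" where
  "digital_seq C1 C2 n = (digital_point C1 n, digital_point C2 n)"

end

theory Submission
  imports Defs
begin

text \<open>Both coordinates are compared digit by digit. The unit matrix copies the
base-p digits n_l of n, which are the digits of phi_p(n). Multiplying theta by
X^l shifts its coefficients by l, so the coefficient of X^(-k) in theta n(X) is
the sum over l of a_(k+l) n_l, which is the k-th entry of H(theta) applied to the
digit vector of n.\<close>

lemma digit_less: "0 < p \<Longrightarrow> digit p n l < p"
  unfolding digit_def by simp

lemma finite_digit_support:
  assumes "1 < p"
  shows "finite {l. digit p n l \<noteq> 0}"
proof (rule finite_subset)
  show "{l. digit p n l \<noteq> 0} \<subseteq> {..n}"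
  proof
    fix l assume "l \<in> {l. digit p n l \<noteq> 0}"
    then have "n div p ^ l \<noteq> 0"
      by (metis digit_def mod_0 mem_Collect_eq)
    then have "p ^ l \<le> n"
      using assms by (simp add: div_eq_0_iff)
    moreover have "l < p ^ l"
      using assms by (intro order_less_le_trans[OF less_exp power_mono]) auto
    ultimately show "l \<in> {..n}" by simp
  qed
qed simp

lemma to_int_mod_ring_digit:
  "to_int_mod_ring (of_nat (digit CARD('p::prime_card) n l) :: 'p mod_ring)
     = int (digit CARD('p) n l)"
  using digit_less[of "CARD('p)" n l] prime_card[where 'a='p]
  by (simp add: of_nat_of_int_mod_ring prime_gt_0_nat)

lemma mat_digits_unit_mat:
  "mat_digits (unit_mat :: nat \<Rightarrow> nat \<Rightarrow> ('p::prime_card) mod_ring) n (k + 1)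
     = of_nat (digit CARD('p) n k)"
proof -
  let ?S = "{l. digit CARD('p) n l \<noteq> 0}"
  have "mat_digits (unit_mat :: nat \<Rightarrow> nat \<Rightarrow> 'p mod_ring) n (k + 1)
      = (\<Sum>l\<in>?S. if l = k then of_nat (digit CARD('p) n l) else 0)"
    unfolding mat_digits_def unit_mat_def by (rule sum.cong) auto
  also have "\<dots> = of_nat (digit CARD('p) n k)"
    using finite_digit_support[OF prime_gt_1_nat[OF prime_card[where 'a='p]], of n]
    by (simp add: sum.delta)
  finally show ?thesis .
qed

lemma fls_nth_mult_natpoly:
  fixes \<theta> :: "('p::prime_card) mod_ring fls"
  shows "fls_nth (\<theta> * natpoly n) (int k) = mat_digits (hankel \<theta>) n k"
  unfolding natpoly_def mat_digits_def hankel_def sum_distrib_left fls_nth_sum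
proof (rule sum.cong[OF refl])
  fix l
  have "\<theta> * (fls_const (of_nat (digit CARD('p) n l)) * fls_X_intpow (- int l))
        = (\<theta> * fls_X_intpow (- int l)) * fls_const (of_nat (digit CARD('p) n l))"
    by (simp add: algebra_simps)
  moreover have "fls_nth (\<theta> * fls_X_intpow (- int l)) (int k) = fls_nth \<theta> (int (k + l))"
    by (subst fls_X_intpow_times_conv_shift(2)) (simp add: add_ac)
  ultimately show "fls_nth (\<theta> * (fls_const (of_nat (digit CARD('p) n l)) * fls_X_intpow (- int l))) (int k)
      = fls_nth \<theta> (int (k + l)) * of_nat (digit CARD('p) n l)"
    by (simp only: fls_mult_const_nth(2))
qed

theorem lemma1:
  fixes \<theta> :: "('p::prime_card) mod_ring fls"
  shows "(\<lambda>n. (phi CARD('p) n, frac_eval (\<theta> * natpoly n)))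
       = digital_seq (unit_mat :: nat \<Rightarrow> nat \<Rightarrow> 'p mod_ring) (hankel \<theta>)"
proof
  fix n
  have "phi CARD('p) n = digital_point (unit_mat :: nat \<Rightarrow> nat \<Rightarrow> 'p mod_ring) n"
    unfolding phi_def digital_point_def mat_digits_unit_mat to_int_mod_ring_digit by simp
  moreover have "frac_eval (\<theta> * natpoly n) = digital_point (hankel \<theta>) n"
    unfolding frac_eval_def digital_point_def fls_nth_mult_natpoly ..
  ultimately show "(phi CARD('p) n, frac_eval (\<theta> * natpoly n))
       = digital_seq (unit_mat :: nat \<Rightarrow> nat \<Rightarrow> 'p mod_ring) (hankel \<theta>) n"
    by (simp add: digital_seq_def)
qed

end
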